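(* Let $t_{\mathrm m},t_{\mathrm b}\ge 1$, $t_{\mathrm{msg}}\ge 0$ and $t_{\mathrm{cut}}$ be integers with $t_{\mathrm{cut}}>\max\{t_{\mathrm m},t_{\mathrm b},t_{\mathrm{msg}}\}$, and let $p_{\mathrm m},p_{\mathrm b}\in(0,1)$. Let $M_1,M_2,M_b$ be independent random variables with $\mathbb P(M_1=j)=\mathbb P(M_2=j)=p_{\mathrm m}(1-p_{\mathrm m})^{j-1}$ and $\mathbb P(M_b=j)=p_{\mathrm b}(1-p_{\mathrm b})^{j-1}$ for $j\in\{1,2,\dots\}$, and put $X_1=t_{\mathrm m}M_1$, $X_2=t_{\mathrm m}M_2$, $X_b=t_{\mathrm b}M_b$, $X_{\max}=\max\{X_1,X_2,X_b\}$, $X_{\min}=\min\{X_1,X_2,X_b\}$. Let $Y=1$ if $X_{\max}-X_{\min}<t_{\mathrm{cut}}$ and $Y=0$ otherwise, let $p=\mathbb P(Y=1)$, and let $$Z=\begin{cases}X_{\max}+t_{\mathrm{msg}}, & Y=1,\\ X_{\min}+t_{\mathrm{cut}}, & Y=0.\end{cases}$$ Let $(Y^{(i)},Z^{(i)})_{i\ge1}$ be i.i.d. copies of $(Y,Z)$, let $N=\min\{i\ge1: Y^{(i)}=1\}$ and $X_{\mathrm{e2e}}=\sum_{i=1}^{N}Z^{(i)}$. For $i,j\in\{1,2,b\}$ define the events $A_i^+=\{X_{\max}=X_i,\ X_{\max}-X_{\min}<t_{\mathrm{cut}}\}$, $A_i^-=\{X_{\max}=X_i,\ X_{\max}-X_{\min}\ge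 t_{\mathrm{cut}}\}$, $A_{ij}^-=\{X_{\max}=X_i,\ X_{\min}=X_j,\ X_{\max}-X_{\min}\ge t_{\mathrm{cut}}\}$, and write juxtaposition of events for their intersection (e.g. $A_1^+A_2^+=A_1^+\cap A_2^+$, $A_{12}^-A_{1b}^-=A_{12}^-\cap A_{1b}^-$). Then $$\mathbb E(X_{\mathrm{e2e}})=\frac{\mathbb E(Z\mathbf 1_{Y=0})+\mathbb E(Z\mathbf 1_{Y=1})}{p},$$ where $$\mathbb E(Z\mathbf 1_{Y=1})=2\mathbb E(Z\mathbf 1_{A_1^+})+\mathbb E(Z\mathbf 1_{A_b^+})-\mathbb E(Z\mathbf 1_{A_1^+A_2^+})-2\mathbb E(Z\mathbf 1_{A_1^+A_b^+})+\mathbb E(Z\mathbf 1_{A_1^+A_2^+A_b^+}),$$ $$\mathbb E(Z\mathbf 1_{Y=0})=2\big(\mathbb E(Z\mathbf 1_{A_{12}^-})+\mathbb E(Z\mathbf 1_{A_{1b}^-})+\mathbb E(Z\mathbf 1_{A_{b1}^-})\big)-2\mathbb E(Z\mathbf 1_{A_{12}^-A_{1b}^-})-\mathbb E(Z\mathbf 1_{A_{b1}^-A_{b2}^-})-\mathbb E(Z\mathbf 1_{A_1^-A_2^-})-2\mathbb E(Z\mathbf 1_{A_1^-A_b^-}).$$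
   Context: This models end-to-end entanglement generation in a chain of three elementary links (two identical metropolitan links 1, 2 and a backbone link b) with a global cut-off: in each round, $X_1,X_2,X_b$ are the times at which the three elementary links are first generated; the round succeeds ($Y=1$) iff all three are generated within a window shorter than $t_{\mathrm{cut}}$; a successful round lasts $X_{\max}+t_{\mathrm{msg}}$ and a failed round lasts $X_{\min}+t_{\mathrm{cut}}$; rounds are repeated independently until the first success, and $X_{\mathrm{e2e}}$ is the total time until a successful end-to-end link. *)

theory Defs
  imports "HOL-Probability.Probability"
begin

datatype link = L1 | L2 | Lb

text \<open>One round is described by the triple (M1, M2, Mb) of attempt counts.
  X_i = t_m M_i (i = 1,2), X_b = t_b M_b.\<close>
definition Xl :: "nat \<Rightarrow> nat \<Rightarrow> link \<Rightarrow> nat \<times> nat \<times> nat \<Rightarrow> real" where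
  "Xl tm tb l \<omega> = (case \<omega> of (m1, m2, mb) \<Rightarrow>
     (case l of L1 \<Rightarrow> real tm * real m1 | L2 \<Rightarrow> real tm * real m2 | Lb \<Rightarrow> real tb * real mb))"

definition Xmax :: "nat \<Rightarrow> nat \<Rightarrow> nat \<times> nat \<times> nat \<Rightarrow> real" where
  "Xmax tm tb \<omega> = max (Xl tm tb L1 \<omega>) (max (Xl tm tb L2 \<omega>) (Xl tm tb Lb \<omega>))"

definition Xmin :: "nat \<Rightarrow> nat \<Rightarrow> nat \<times> nat \<times> nat \<Rightarrow> real" where
  "Xmin tm tb \<omega> = min (Xl tm tb L1 \<omega>) (min (Xl tm tb L2 \<omega>) (Xl tm tb Lb \<omega>))"

definition Yr :: "nat \<Rightarrow> nat \<Rightarrow> nat \<Rightarrow> nat \<times> nat \<times> nat \<Rightarrow> bool" where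
  "Yr tm tb tcut \<omega> \<longleftrightarrow> Xmax tm tb \<omega> - Xmin tm tb \<omega> < real tcut"

definition Zr :: "nat \<Rightarrow> nat \<Rightarrow> nat \<Rightarrow> nat \<Rightarrow> nat \<times> nat \<times> nat \<Rightarrow> real" where
  "Zr tm tb tmsg tcut \<omega> =
     (if Yr tm tb tcut \<omega> then Xmax tm tb \<omega> + real tmsg else Xmin tm tb \<omega> + real tcut)"

definition Aplus :: "nat \<Rightarrow> nat \<Rightarrow> nat \<Rightarrow> link \<Rightarrow> (nat \<times> nat \<times> nat) set" where
  "Aplus tm tb tcut i = {\<omega>. Xmax tm tb \<omega> = Xl tm tb i \<omega> \<and> Xmax tm tb \<omega> - Xmin tm tb \<omega> < real tcut}"

definition Aminus :: "nat \<Rightarrow> nat \<Rightarrow> nat \<Rightarrow> link \<Rightarrow> (nat \<times> nat \<times> nat) set" where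
  "Aminus tm tb tcut i = {\<omega>. Xmax tm tb \<omega> = Xl tm tb i \<omega> \<and> Xmax tm tb \<omega> - Xmin tm tb \<omega> \<ge> real tcut}"

definition Aminus2 :: "nat \<Rightarrow> nat \<Rightarrow> nat \<Rightarrow> link \<Rightarrow> link \<Rightarrow> (nat \<times> nat \<times> nat) set" where
  "Aminus2 tm tb tcut i j = {\<omega>. Xmax tm tb \<omega> = Xl tm tb i \<omega> \<and> Xmin tm tb \<omega> = Xl tm tb j \<omega>
      \<and> Xmax tm tb \<omega> - Xmin tm tb \<omega> \<ge> real tcut}"

text \<open>Given an i.i.d. sequence of rounds (a stream, index 0 = first round),
  N is the index of the first successful round and X_e2e the sum of the
  durations of rounds 0..N.\<close>
definition first_success :: "nat \<Rightarrow> nat \<Rightarrow> nat \<Rightarrow> (nat \<times> nat \<times> nat) stream \<Rightarrow> nat" where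
  "first_success tm tb tcut \<omega> = (LEAST i. Yr tm tb tcut (\<omega> !! i))"

definition Xe2e :: "nat \<Rightarrow> nat \<Rightarrow> nat \<Rightarrow> nat \<Rightarrow> (nat \<times> nat \<times> nat) stream \<Rightarrow> real" where
  "Xe2e tm tb tmsg tcut \<omega> = (\<Sum>i\<le>first_success tm tb tcut \<omega>. Zr tm tb tmsg tcut (\<omega> !! i))"

end

theory Submission imports Defs begin

(* Round i+1 contributes its duration Z to X_e2e exactly when rounds 1..i all failed; this event
   has probability (1-p)^i and is independent of round i+1, so the contribution has expectation
   (1-p)^i E Z and summing the geometric series gives E X_e2e = E Z / p.  The same computation with
   Z = 1 shows that some round succeeds almost surely, so the junk value of LEAST on streams without
   success is irrelevant.  The formulas for E(Z 1_{Y=1}) and E(Z 1_{Y=0}) are inclusion-exclusion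
   over the link attaining the maximum (and, for failed rounds, the minimum) -- ties have positive
   probability because the X_i are lattice valued -- combined with the symmetry exchanging the
   identically distributed links 1 and 2. *)

lemma suminf_until_Least:
  fixes z :: "nat \<Rightarrow> ennreal"
  assumes "\<exists>i. y i"
  shows "(\<Sum>i. if \<forall>k<i. \<not> y k then z i else 0) = (\<Sum>i\<le>(LEAST i. y i). z i)"
proof -
  have before: "(\<forall>k<i. \<not> y k) \<longleftrightarrow> i \<le> (LEAST i. y i)" for i
    using assms by (metis LeastI_ex not_less_Least not_le_imp_less order_less_le_trans)
  have "(\<Sum>i. if \<forall>k<i. \<not> y k then z i else 0) = (\<Sum>i\<le>(LEAST i. y i). if \<forall>k<i. \<not> y k then z i else 0)"
    by (rule suminf_finite) (auto simp: before)
  then show ?thesis by (simp add: before)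
qed

lemma (in prob_space) nn_integral_stream_before_success:
  fixes f :: "'a \<Rightarrow> ennreal"
  assumes [measurable]: "Measurable.pred M Y" "f \<in> borel_measurable M"
  shows "(\<integral>\<^sup>+\<omega>. (if \<forall>k<i. \<not> Y (\<omega> !! k) then f (\<omega> !! i) else 0) \<partial>stream_space M)
           = emeasure M {x\<in>space M. \<not> Y x} ^ i * (\<integral>\<^sup>+x. f x \<partial>M)"
proof (induction i)
  case 0
  interpret S: prob_space "stream_space M" by (rule prob_space_stream_space)
  show ?case by (subst nn_integral_stream_space) (simp_all add: S.emeasure_space_1)
next
  case (Suc i)
  have shift: "(\<forall>k<Suc i. \<not> Y ((x ## X) !! k)) \<longleftrightarrow> \<not> Y x \<and> (\<forall>k<i. \<not> Y (X !! k))" for x X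
    by (auto simp: less_Suc_eq_0_disj)
  have "(\<integral>\<^sup>+\<omega>. (if \<forall>k<Suc i. \<not> Y (\<omega> !! k) then f (\<omega> !! Suc i) else 0) \<partial>stream_space M)
      = (\<integral>\<^sup>+x. indicator {x\<in>space M. \<not> Y x} x *
            (\<integral>\<^sup>+\<omega>. (if \<forall>k<i. \<not> Y (\<omega> !! k) then f (\<omega> !! i) else 0) \<partial>stream_space M) \<partial>M)"
    by (subst nn_integral_stream_space)
      (auto intro!: nn_integral_cong simp: shift split: split_indicator)
  also have "\<dots> = emeasure M {x\<in>space M. \<not> Y x} ^ Suc i * (\<integral>\<^sup>+x. f x \<partial>M)"
    by (simp add: Suc nn_integral_multc mult.assoc)
  finally show ?case .
qed

lemma (in prob_space) emeasure_not_pred: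
  "Measurable.pred M Y \<Longrightarrow> emeasure M {x\<in>space M. \<not> Y x} = ennreal (1 - prob {x\<in>space M. Y x})"
  using prob_neg[of Y] by (simp add: emeasure_eq_measure)

lemma (in prob_space) AE_stream_eventually_success:
  assumes [measurable]: "Measurable.pred M Y" and success: "prob {x\<in>space M. Y x} > 0"
  shows "AE \<omega> in stream_space M. \<exists>i. Y (\<omega> !! i)"
proof -
  define q where "q = 1 - prob {x\<in>space M. Y x}"
  have q: "0 \<le> q" "q < 1" using success prob_le_1 unfolding q_def by auto
  have failure: "emeasure M {x\<in>space M. \<not> Y x} = ennreal q"
    unfolding q_def by (rule emeasure_not_pred) measurable
  let ?F = "{\<omega>\<in>space (stream_space M). \<forall>i. \<not> Y (\<omega> !! i)}"
  have bound: "emeasure (stream_space M) ?F \<le> ennreal (q ^ i)" for i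
  proof -
    have "emeasure (stream_space M) ?F \<le> emeasure (stream_space M) {\<omega>\<in>space (stream_space M). \<forall>k<i. \<not> Y (\<omega> !! k)}"
      by (intro emeasure_mono) auto
    also have "\<dots> = (\<integral>\<^sup>+\<omega>. indicator {\<omega>\<in>space (stream_space M). \<forall>k<i. \<not> Y (\<omega> !! k)} \<omega> \<partial>stream_space M)"
      by simp
    also have "\<dots> = (\<integral>\<^sup>+\<omega>. (if \<forall>k<i. \<not> Y (\<omega> !! k) then 1 else 0) \<partial>stream_space M)"
      by (intro nn_integral_cong) (simp split: split_indicator)
    also have "\<dots> = ennreal (q ^ i)"
      using nn_integral_stream_before_success[of Y "\<lambda>_. 1" i] q
      by (simp add: failure emeasure_space_1 ennreal_power)
    finally show ?thesis .
  qed
  have "(\<lambda>i. ennreal (q ^ i)) \<longlonglongrightarrow> 0"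
    using q by (auto intro!: LIMSEQ_power_zero simp: ennreal_0[symmetric] simp del: ennreal_0)
  then have "emeasure (stream_space M) ?F \<le> 0"
    by (rule LIMSEQ_le_const) (use bound in auto)
  then show ?thesis
    by (intro AE_I[where N="?F"]) auto
qed

lemma (in prob_space) integral_stream_sum_until_success:
  assumes Y[measurable]: "Measurable.pred M Y" and success: "prob {x\<in>space M. Y x} > 0"
    and Z: "integrable M Z" and Z_nonneg: "\<And>x. x \<in> space M \<Longrightarrow> 0 \<le> Z x"
  shows "(\<integral>\<omega>. (\<Sum>i\<le>(LEAST i. Y (\<omega> !! i)). Z (\<omega> !! i)) \<partial>stream_space M)
           = expectation Z / prob {x\<in>space M. Y x}"
proof -
  interpret S: prob_space "stream_space M" by (rule prob_space_stream_space)
  define p where "p = prob {x\<in>space M. Y x}"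
  define q where "q = 1 - p"
  have q: "0 \<le> q" "q < 1" using success prob_le_1 unfolding q_def p_def by auto
  have failure: "emeasure M {x\<in>space M. \<not> Y x} = ennreal q"
    unfolding q_def p_def by (rule emeasure_not_pred) measurable
  have [measurable]: "Z \<in> borel_measurable M" using Z by auto
  have EZ: "0 \<le> expectation Z" "(\<integral>\<^sup>+x. ennreal (Z x) \<partial>M) = ennreal (expectation Z)"
    using Z Z_nonneg by (auto intro!: integral_nonneg_AE nn_integral_eq_integral)
  define u where "u \<omega> = (\<Sum>i. if \<forall>k<i. \<not> Y (\<omega> !! k) then ennreal (Z (\<omega> !! i)) else 0)" for \<omega>
  have "(\<integral>\<^sup>+\<omega>. u \<omega> \<partial>stream_space M)
      = (\<Sum>i. \<integral>\<^sup>+\<omega>. (if \<forall>k<i. \<not> Y (\<omega> !! k) then ennreal (Z (\<omega> !! i)) else 0) \<partial>stream_space M)"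
    unfolding u_def by (rule nn_integral_suminf) measurable
  also have "\<dots> = (\<Sum>i. ennreal (q ^ i * expectation Z))"
    using nn_integral_stream_before_success[of Y "\<lambda>x. ennreal (Z x)"] q EZ
    by (simp add: failure ennreal_power ennreal_mult')
  also have "\<dots> = ennreal (expectation Z / p)"
    using sums_mult2[OF geometric_sums[of q], of "expectation Z"] q EZ
    by (subst suminf_ennreal2) (auto simp: q_def sums_iff)
  finally have series: "(\<integral>\<^sup>+\<omega>. u \<omega> \<partial>stream_space M) = ennreal (expectation Z / p)" .
  have "AE \<omega> in stream_space M. u \<omega> = ennreal (\<Sum>i\<le>(LEAST i. Y (\<omega> !! i)). Z (\<omega> !! i))"
    using AE_stream_eventually_success[OF Y success] AE_space
  proof eventually_elim
    case (elim \<omega>)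
    then have "\<And>i. 0 \<le> Z (\<omega> !! i)" by (auto intro: Z_nonneg snth_in simp: space_stream_space)
    then show ?case using elim by (simp add: u_def suminf_until_Least)
  qed
  then have "(\<integral>\<^sup>+\<omega>. ennreal (\<Sum>i\<le>(LEAST i. Y (\<omega> !! i)). Z (\<omega> !! i)) \<partial>stream_space M) = ennreal (expectation Z / p)"
    using series by (simp add: nn_integral_cong_AE)
  then show ?thesis
    using EZ success
    by (subst integral_eq_nn_integral) (auto intro!: sum_nonneg Z_nonneg snth_in simp: space_stream_space p_def)
qed

lemma integrable_real_shifted_geometric_pmf:
  fixes q :: "nat pmf"
  assumes "0 < r" "r < 1" and q: "\<And>j. pmf q j = (if j \<ge> 1 then r * (1 - r) ^ (j - 1) else 0)"
  shows "integrable q real"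
proof -
  have "q = map_pmf Suc (geometric_pmf r)"
  proof (rule pmf_eqI)
    fix j
    show "pmf q j = pmf (map_pmf Suc (geometric_pmf r)) j"
    proof (cases j)
      case 0
      then show ?thesis using q by (simp add: pmf_map_outside)
    next
      case (Suc k)
      then show ?thesis using q assms by (simp add: pmf_map_inj' mult.commute)
    qed
  qed
  moreover have "integrable (geometric_pmf r) (\<lambda>x. 1 + real x)"
    using integrable_real_geometric_pmf[of r] assms by simp
  ultimately show ?thesis by (simp add: integrable_map_pmf_eq)
qed

lemma Xl_nonneg: "0 \<le> Xl tm tb l \<omega>"
  by (cases \<omega>; cases l) (auto simp: Xl_def)

lemma Zr_nonneg: "0 \<le> Zr tm tb tmsg tcut \<omega>"
  using Xl_nonneg[of tm tb _ \<omega>] by (auto simp: Zr_def Xmax_def Xmin_def max_def min_def)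

lemma Zr_le: "Zr tm tb tmsg tcut \<omega> \<le> Xl tm tb L1 \<omega> + Xl tm tb L2 \<omega> + Xl tm tb Lb \<omega> + tmsg + tcut"
  using Xl_nonneg[of tm tb _ \<omega>] by (auto simp: Zr_def Xmax_def Xmin_def max_def min_def)

lemma integrable_Zr:
  fixes q r :: "nat pmf"
  assumes "integrable q real" "integrable r real"
  shows "integrable (pair_pmf q (pair_pmf q r)) (Zr tm tb tmsg tcut)"
proof -
  let ?P = "pair_pmf q (pair_pmf q r)"
  have "integrable ?P (\<lambda>\<omega>. real (fst \<omega>))" "integrable (map_pmf snd ?P) (\<lambda>\<omega>. real (fst \<omega>))"
    "integrable (map_pmf snd ?P) (\<lambda>\<omega>. real (snd \<omega>))"
    using assms by (simp_all flip: integrable_map_pmf_eq add: map_fst_pair_pmf map_snd_pair_pmf)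
  then have "integrable ?P (Xl tm tb l)" for l
    unfolding Xl_def[abs_def] by (cases l) (simp_all add: case_prod_unfold)
  then have "integrable ?P (\<lambda>\<omega>. Xl tm tb L1 \<omega> + Xl tm tb L2 \<omega> + Xl tm tb Lb \<omega> + tmsg + tcut)"
    by simp
  then show ?thesis
    by (rule Bochner_Integration.integrable_bound) (auto intro!: AE_I2 order_trans[OF Zr_le abs_ge_self] simp: Zr_nonneg)
qed

lemma prob_Yr_pos:
  fixes q r :: "nat pmf"
  assumes "tcut > max tm tb" "pmf q 1 > 0" "pmf r 1 > 0"
  shows "measure_pmf.prob (pair_pmf q (pair_pmf q r)) {\<omega>. Yr tm tb tcut \<omega>} > 0"
proof -
  have "Yr tm tb tcut (1, 1, 1)"
    using assms(1) by (auto simp: Yr_def Xmax_def Xmin_def Xl_def max_def min_def)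
  then have "pmf (pair_pmf q (pair_pmf q r)) (1, 1, 1) \<le> measure_pmf.prob (pair_pmf q (pair_pmf q r)) {\<omega>. Yr tm tb tcut \<omega>}"
    by (simp add: measure_pmf_single[symmetric] measure_pmf.finite_measure_mono)
  moreover have "pmf (pair_pmf q (pair_pmf q r)) (1, 1, 1) > 0"
    using assms(2,3) by (simp add: pmf_pair)
  ultimately show ?thesis by linarith
qed

definition swap12 :: "'a \<times> 'a \<times> 'b \<Rightarrow> 'a \<times> 'a \<times> 'b" where
  "swap12 \<omega> = (case \<omega> of (m1, m2, mb) \<Rightarrow> (m2, m1, mb))"

fun link_swap12 :: "link \<Rightarrow> link" where
  "link_swap12 L1 = L2" | "link_swap12 L2 = L1" | "link_swap12 Lb = Lb"

lemma swap12_swap12 [simp]: "swap12 (swap12 \<omega>) = \<omega>"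
  by (cases \<omega>) (simp add: swap12_def)

lemma map_pmf_swap12: "map_pmf swap12 (pair_pmf q (pair_pmf q r)) = pair_pmf q (pair_pmf q r)"
proof (rule pmf_eqI)
  fix \<omega>
  have "pmf (map_pmf swap12 (pair_pmf q (pair_pmf q r))) (swap12 (swap12 \<omega>)) = pmf (pair_pmf q (pair_pmf q r)) (swap12 \<omega>)"
    by (rule pmf_map_inj') (metis injI swap12_swap12)
  then show "pmf (map_pmf swap12 (pair_pmf q (pair_pmf q r))) \<omega> = pmf (pair_pmf q (pair_pmf q r)) \<omega>"
    by (cases \<omega>) (simp add: swap12_def pmf_pair)
qed

lemma Xl_swap12: "Xl tm tb l (swap12 \<omega>) = Xl tm tb (link_swap12 l) \<omega>"
  by (cases \<omega>; cases l) (auto simp: Xl_def swap12_def)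

lemma Xmax_swap12 [simp]: "Xmax tm tb (swap12 \<omega>) = Xmax tm tb \<omega>"
  by (simp add: Xmax_def Xl_swap12)

lemma Xmin_swap12 [simp]: "Xmin tm tb (swap12 \<omega>) = Xmin tm tb \<omega>"
  by (simp add: Xmin_def Xl_swap12)

lemma Zr_swap12: "Zr tm tb tmsg tcut (swap12 \<omega>) = Zr tm tb tmsg tcut \<omega>"
  by (simp add: Zr_def Yr_def)

lemma vimage_swap12_Aplus: "swap12 -` Aplus tm tb tcut l = Aplus tm tb tcut (link_swap12 l)"
  by (auto simp: Aplus_def Xl_swap12)

lemma vimage_swap12_Aminus: "swap12 -` Aminus tm tb tcut l = Aminus tm tb tcut (link_swap12 l)"
  by (auto simp: Aminus_def Xl_swap12)

lemma vimage_swap12_Aminus2: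
  "swap12 -` Aminus2 tm tb tcut l l' = Aminus2 tm tb tcut (link_swap12 l) (link_swap12 l')"
  by (auto simp: Aminus2_def Xl_swap12)

lemma integral_Zr_indicator_vimage_swap12:
  "(\<integral>\<omega>. Zr tm tb tmsg tcut \<omega> * indicator (swap12 -` A) \<omega> \<partial>pair_pmf q (pair_pmf q r))
     = (\<integral>\<omega>. Zr tm tb tmsg tcut \<omega> * indicator A \<omega> \<partial>pair_pmf q (pair_pmf q r))"
proof -
  have "(\<integral>\<omega>. Zr tm tb tmsg tcut \<omega> * indicator (swap12 -` A) \<omega> \<partial>pair_pmf q (pair_pmf q r))
      = (\<integral>\<omega>. Zr tm tb tmsg tcut \<omega> * indicator A \<omega> \<partial>map_pmf swap12 (pair_pmf q (pair_pmf q r)))"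
    by (simp add: Zr_swap12 indicator_vimage)
  then show ?thesis by (simp only: map_pmf_swap12)
qed

lemma indicator_Yr_incl_excl:
  "indicator {\<omega>. Yr tm tb tcut \<omega>} \<omega> =
     (indicator (Aplus tm tb tcut L1) \<omega> + indicator (Aplus tm tb tcut L2) \<omega> + indicator (Aplus tm tb tcut Lb) \<omega>
     - indicator (Aplus tm tb tcut L1 \<inter> Aplus tm tb tcut L2) \<omega> - indicator (Aplus tm tb tcut L1 \<inter> Aplus tm tb tcut Lb) \<omega>
     - indicator (Aplus tm tb tcut L2 \<inter> Aplus tm tb tcut Lb) \<omega>
     + indicator (Aplus tm tb tcut L1 \<inter> Aplus tm tb tcut L2 \<inter> Aplus tm tb tcut Lb) \<omega> :: real)"
  by (auto simp: Aplus_def Yr_def Xmax_def Xmin_def max_def min_def indicator_def)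

(* tcut > 0 forces X_max > X_min on a failed round, so no link is both maximal and minimal. *)
lemma indicator_not_Yr_incl_excl:
  assumes "tcut > 0"
  shows "indicator {\<omega>. \<not> Yr tm tb tcut \<omega>} \<omega> =
     (indicator (Aminus2 tm tb tcut L1 L2) \<omega> + indicator (Aminus2 tm tb tcut L2 L1) \<omega>
     + indicator (Aminus2 tm tb tcut L1 Lb) \<omega> + indicator (Aminus2 tm tb tcut L2 Lb) \<omega>
     + indicator (Aminus2 tm tb tcut Lb L1) \<omega> + indicator (Aminus2 tm tb tcut Lb L2) \<omega>
     - indicator (Aminus2 tm tb tcut L1 L2 \<inter> Aminus2 tm tb tcut L1 Lb) \<omega>
     - indicator (Aminus2 tm tb tcut L2 L1 \<inter> Aminus2 tm tb tcut L2 Lb) \<omega>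
     - indicator (Aminus2 tm tb tcut Lb L1 \<inter> Aminus2 tm tb tcut Lb L2) \<omega>
     - indicator (Aminus tm tb tcut L1 \<inter> Aminus tm tb tcut L2) \<omega>
     - indicator (Aminus tm tb tcut L1 \<inter> Aminus tm tb tcut Lb) \<omega>
     - indicator (Aminus tm tb tcut L2 \<inter> Aminus tm tb tcut Lb) \<omega> :: real)"
  using assms by (auto simp: Aminus_def Aminus2_def Yr_def Xmax_def Xmin_def max_def min_def indicator_def)

lemma expectation_Zr_success:
  fixes q r :: "nat pmf"
  assumes "integrable (pair_pmf q (pair_pmf q r)) (Zr tm tb tmsg tcut)"
  defines "E \<equiv> \<lambda>A. measure_pmf.expectation (pair_pmf q (pair_pmf q r)) (\<lambda>\<omega>. Zr tm tb tmsg tcut \<omega> * indicator A \<omega>)"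
    and "Ap \<equiv> Aplus tm tb tcut"
  shows "E {\<omega>. Yr tm tb tcut \<omega>} = 2 * E (Ap L1) + E (Ap Lb) - E (Ap L1 \<inter> Ap L2) - 2 * E (Ap L1 \<inter> Ap Lb)
                    + E (Ap L1 \<inter> Ap L2 \<inter> Ap Lb)"
proof -
  have integrable: "integrable (pair_pmf q (pair_pmf q r)) (\<lambda>\<omega>. Zr tm tb tmsg tcut \<omega> * indicator A \<omega>)" for A
    using assms(1) by (intro integrable_real_mult_indicator) simp_all
  have E_swap12: "E (swap12 -` A) = E A" for A
    unfolding E_def by (rule integral_Zr_indicator_vimage_swap12)
  have "E {\<omega>. Yr tm tb tcut \<omega>} = E (Ap L1) + E (Ap L2) + E (Ap Lb) - E (Ap L1 \<inter> Ap L2)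
      - E (Ap L1 \<inter> Ap Lb) - E (Ap L2 \<inter> Ap Lb) + E (Ap L1 \<inter> Ap L2 \<inter> Ap Lb)"
    unfolding E_def Ap_def indicator_Yr_incl_excl by (simp add: ring_distribs integrable)
  moreover have "E (Ap L2) = E (Ap L1)" "E (Ap L2 \<inter> Ap Lb) = E (Ap L1 \<inter> Ap Lb)"
    using E_swap12[of "Ap L1"] E_swap12[of "Ap L1 \<inter> Ap Lb"]
    by (simp_all add: Ap_def vimage_swap12_Aplus)
  ultimately show ?thesis by simp
qed

lemma expectation_Zr_failure:
  fixes q r :: "nat pmf"
  assumes "integrable (pair_pmf q (pair_pmf q r)) (Zr tm tb tmsg tcut)" and "tcut > 0"
  defines "E \<equiv> \<lambda>A. measure_pmf.expectation (pair_pmf q (pair_pmf q r)) (\<lambda>\<omega>. Zr tm tb tmsg tcut \<omega> * indicator A \<omega>)"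
    and "Am \<equiv> Aminus tm tb tcut"
    and "Amm \<equiv> Aminus2 tm tb tcut"
  shows "E {\<omega>. \<not> Yr tm tb tcut \<omega>} = 2 * (E (Amm L1 L2) + E (Amm L1 Lb) + E (Amm Lb L1))
                    - 2 * E (Amm L1 L2 \<inter> Amm L1 Lb) - E (Amm Lb L1 \<inter> Amm Lb L2)
                    - E (Am L1 \<inter> Am L2) - 2 * E (Am L1 \<inter> Am Lb)"
proof -
  have integrable: "integrable (pair_pmf q (pair_pmf q r)) (\<lambda>\<omega>. Zr tm tb tmsg tcut \<omega> * indicator A \<omega>)" for A
    using assms(1) by (intro integrable_real_mult_indicator) simp_all
  have E_swap12: "E (swap12 -` A) = E A" for A
    unfolding E_def by (rule integral_Zr_indicator_vimage_swap12)
  have "E {\<omega>. \<not> Yr tm tb tcut \<omega>} = E (Amm L1 L2) + E (Amm L2 L1) + E (Amm L1 Lb) + E (Amm L2 Lb)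
      + E (Amm Lb L1) + E (Amm Lb L2) - E (Amm L1 L2 \<inter> Amm L1 Lb) - E (Amm L2 L1 \<inter> Amm L2 Lb)
      - E (Amm Lb L1 \<inter> Amm Lb L2) - E (Am L1 \<inter> Am L2) - E (Am L1 \<inter> Am Lb) - E (Am L2 \<inter> Am Lb)"
    unfolding E_def Amm_def Am_def indicator_not_Yr_incl_excl[OF \<open>tcut > 0\<close>]
    by (simp add: ring_distribs integrable)
  moreover have "E (Amm L2 L1) = E (Amm L1 L2)" "E (Amm L2 Lb) = E (Amm L1 Lb)"
    "E (Amm Lb L2) = E (Amm Lb L1)" "E (Amm L2 L1 \<inter> Amm L2 Lb) = E (Amm L1 L2 \<inter> Amm L1 Lb)"
    "E (Am L2 \<inter> Am Lb) = E (Am L1 \<inter> Am Lb)"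
    using E_swap12[of "Amm L1 L2"] E_swap12[of "Amm L1 Lb"] E_swap12[of "Amm Lb L1"]
      E_swap12[of "Amm L1 L2 \<inter> Amm L1 Lb"] E_swap12[of "Am L1 \<inter> Am Lb"]
    by (simp_all add: Amm_def Am_def vimage_swap12_Aminus vimage_swap12_Aminus2)
  ultimately show ?thesis by simp
qed

theorem mainTheorem1:
  fixes tm tb tmsg tcut :: nat and pm pb :: real and qm qb :: "nat pmf"
  assumes "tm \<ge> 1" and "tb \<ge> 1" and "tcut > max tm (max tb tmsg)"
    and "0 < pm" and "pm < 1" and "0 < pb" and "pb < 1"
    and "\<And>j. pmf qm j = (if j \<ge> 1 then pm * (1 - pm) ^ (j - 1) else 0)"
    and "\<And>j. pmf qb j = (if j \<ge> 1 then pb * (1 - pb) ^ (j - 1) else 0)"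
  defines "p \<equiv> measure_pmf.prob (pair_pmf qm (pair_pmf qm qb)) {\<omega>. Yr tm tb tcut \<omega>}"
    and "E \<equiv> \<lambda>A. measure_pmf.expectation (pair_pmf qm (pair_pmf qm qb)) (\<lambda>\<omega>. Zr tm tb tmsg tcut \<omega> * indicator A \<omega>)"
    and "Ap \<equiv> Aplus tm tb tcut"
    and "Am \<equiv> Aminus tm tb tcut"
    and "Amm \<equiv> Aminus2 tm tb tcut"
  shows "(\<integral>\<omega>. Xe2e tm tb tmsg tcut \<omega> \<partial>stream_space (measure_pmf (pair_pmf qm (pair_pmf qm qb))))
           = (E {\<omega>. \<not> Yr tm tb tcut \<omega>} + E {\<omega>. Yr tm tb tcut \<omega>}) / p
    \<and> E {\<omega>. Yr tm tb tcut \<omega>} = 2 * E (Ap L1) + E (Ap Lb) - E (Ap L1 \<inter> Ap L2) - 2 * E (Ap L1 \<inter> Ap Lb)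
                    + E (Ap L1 \<inter> Ap L2 \<inter> Ap Lb)
    \<and> E {\<omega>. \<not> Yr tm tb tcut \<omega>} = 2 * (E (Amm L1 L2) + E (Amm L1 Lb) + E (Amm Lb L1))
                    - 2 * E (Amm L1 L2 \<inter> Amm L1 Lb) - E (Amm Lb L1 \<inter> Amm Lb L2)
                    - E (Am L1 \<inter> Am L2) - 2 * E (Am L1 \<inter> Am Lb)"
proof -
  let ?P = "pair_pmf qm (pair_pmf qm qb)" and ?Z = "Zr tm tb tmsg tcut"
  have Z: "integrable ?P ?Z"
    using assms(4-9) by (intro integrable_Zr integrable_real_shifted_geometric_pmf)
  have "p > 0"
    unfolding p_def using assms(3-9) by (intro prob_Yr_pos) auto
  have "measure_pmf.expectation ?P ?Z = E {\<omega>. \<not> Yr tm tb tcut \<omega>} + E {\<omega>. Yr tm tb tcut \<omega>}"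
    unfolding E_def using Z
    by (subst Bochner_Integration.integral_add[symmetric])
       (auto intro!: integrable_real_mult_indicator Bochner_Integration.integral_cong split: split_indicator)
  then have "(\<integral>\<omega>. Xe2e tm tb tmsg tcut \<omega> \<partial>stream_space (measure_pmf ?P))
      = (E {\<omega>. \<not> Yr tm tb tcut \<omega>} + E {\<omega>. Yr tm tb tcut \<omega>}) / p"
    using measure_pmf.integral_stream_sum_until_success[of "Yr tm tb tcut" _ ?Z] Z \<open>p > 0\<close>
    by (simp add: Xe2e_def first_success_def p_def Zr_nonneg)
  moreover have "tcut > 0" using assms(3) by simp
  ultimately show ?thesis
    using expectation_Zr_success[OF Z] expectation_Zr_failure[OF Z]
    unfolding E_def Ap_def Am_def Amm_def by blast
qed

end
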